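(* Let $n\ge j\ge1$ be integers, and let $\lambda=(\lambda_1,\lambda_2,\lambda_3)\in\mathbb Z^3$ with $\lambda_1\ge\lambda_2\ge\lambda_3$ and $\max\{\lambda_1-\lambda_2,\lambda_2-\lambda_3\}\le n-j$. Then the number of $(ZK,K_n)$-double cosets contained in $ZK\lambda(\varpi)K$ is at most $q^{4n-4j}(1+1/q)^3$.
   Context: $F$ is a $p$-adic field with $p\ne2,3$, ring of integers $R$, uniformizer $\varpi$, residue field of order $q$. $G=GL_3(F)$, $K=GL_3(R)$, $Z$ is the center of $G$, $K_n$ is the subgroup of $K$ of elements congruent to the identity mod $\varpi^n$, and $\lambda(\varpi)=\operatorname{diag}(\varpi^{\lambda_1},\varpi^{\lambda_2},\varpi^{\lambda_3})$. *)

theory Defs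
  imports "HOL-Analysis.Analysis" "HOL-Library.Numeral_Type"
begin

text \<open>A normalized discrete valuation v on a field 'a (v is only meaningful on nonzero
  elements; v 0 is irrelevant).  The valuation ring is R, and
  "in_ideal v n x" means x \<in> \<varpi>^n R.\<close>

definition in_ideal :: "('a::field \<Rightarrow> int) \<Rightarrow> int \<Rightarrow> 'a \<Rightarrow> bool" where
  "in_ideal v n x \<longleftrightarrow> x = 0 \<or> v x \<ge> n"

definition val_ring :: "('a::field \<Rightarrow> int) \<Rightarrow> 'a set" where
  "val_ring v = {x. in_ideal v 0 x}"

definition residue_field :: "('a::field \<Rightarrow> int) \<Rightarrow> 'a set set" where
  "residue_field v = val_ring v // {(x, y). x \<in> val_ring v \<and> y \<in> val_ring v \<and> in_ideal v 1 (x - y)}"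

definition residue_card :: "('a::field \<Rightarrow> int) \<Rightarrow> nat" where
  "residue_card v = card (residue_field v)"

definition residue_char :: "('a::field \<Rightarrow> int) \<Rightarrow> nat" where
  "residue_char v = (THE p. prime p \<and> in_ideal v 1 (of_nat p))"

text \<open>A p-adic field: a field of characteristic 0, complete with respect to a normalized
  discrete valuation with finite residue field (i.e. a finite extension of Q_p).\<close>
definition padic_field :: "('a::field \<Rightarrow> int) \<Rightarrow> bool" where
  "padic_field v \<longleftrightarrow>
     (\<forall>x y. x \<noteq> 0 \<and> y \<noteq> 0 \<longrightarrow> v (x * y) = v x + v y) \<and>
     (\<forall>x y. x \<noteq> 0 \<and> y \<noteq> 0 \<and> x + y \<noteq> 0 \<longrightarrow> v (x + y) \<ge> min (v x) (v y)) \<and>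
     (\<exists>x. x \<noteq> 0 \<and> v x = 1) \<and>
     inj (of_nat :: nat \<Rightarrow> 'a) \<and>
     finite (residue_field v) \<and>
     (\<forall>s :: nat \<Rightarrow> 'a.
        (\<forall>N. \<exists>M. \<forall>m\<ge>M. \<forall>k\<ge>M. in_ideal v N (s m - s k)) \<longrightarrow>
        (\<exists>L. \<forall>N. \<exists>M. \<forall>m\<ge>M. in_ideal v N (s m - L)))"

type_synonym 'a mat3 = "'a ^ 3 ^ 3"

definition GL3 :: "'a::field mat3 set" where
  "GL3 = {g. invertible g}"

definition integral_mat :: "('a::field \<Rightarrow> int) \<Rightarrow> 'a mat3 \<Rightarrow> bool" where
  "integral_mat v g \<longleftrightarrow> (\<forall>i j. g $ i $ j \<in> val_ring v)"

definition Kgrp :: "('a::field \<Rightarrow> int) \<Rightarrow> 'a mat3 set" where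
  "Kgrp v = {g. \<exists>h. g ** h = mat 1 \<and> h ** g = mat 1 \<and> integral_mat v g \<and> integral_mat v h}"

definition Kn :: "('a::field \<Rightarrow> int) \<Rightarrow> nat \<Rightarrow> 'a mat3 set" where
  "Kn v n = {g \<in> Kgrp v. \<forall>i j. in_ideal v (int n) (g $ i $ j - (mat 1 :: 'a mat3) $ i $ j)}"

definition Zgrp :: "'a::field mat3 set" where
  "Zgrp = {mat c | c. c \<noteq> 0}"

definition lam_mat :: "'a::field \<Rightarrow> int \<Rightarrow> int \<Rightarrow> int \<Rightarrow> 'a mat3" where
  "lam_mat w l1 l2 l3 = (\<chi> i j. if i = j then
       (if i = 1 then w powi l1 else if i = 2 then w powi l2 else w powi l3) else 0)"

definition ZK_K :: "('a::field \<Rightarrow> int) \<Rightarrow> 'a mat3 \<Rightarrow> 'a mat3 set" where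
  "ZK_K v g = {z ** k ** g ** k' | z k k'. z \<in> Zgrp \<and> k \<in> Kgrp v \<and> k' \<in> Kgrp v}"

definition ZK_Kn :: "('a::field \<Rightarrow> int) \<Rightarrow> nat \<Rightarrow> 'a mat3 \<Rightarrow> 'a mat3 set" where
  "ZK_Kn v n g = {z ** k ** g ** k' | z k k'. z \<in> Zgrp \<and> k \<in> Kgrp v \<and> k' \<in> Kn v n}"

definition dcosets_in :: "('a::field \<Rightarrow> int) \<Rightarrow> nat \<Rightarrow> 'a mat3 set \<Rightarrow> 'a mat3 set set" where
  "dcosets_in v n S = {D. \<exists>g \<in> GL3. D = ZK_Kn v n g \<and> D \<subseteq> S}"

end

theory Submission
  imports Defs
begin

text \<open>
  Put N = n - j and let \<Gamma> = Kgrp_level v N be the set of h \<in> K with h21, h32 \<in> \<varpi>^N R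
  and h31 \<in> \<varpi>^(2N) R.  The gap condition gives \<lambda>(\<varpi>) h \<lambda>(\<varpi>)^-1 \<in> K for h \<in> \<Gamma>, so if
  K = \<Gamma> T, every (ZK, K_n)-double coset in ZK \<lambda>(\<varpi>) K is ZK \<lambda>(\<varpi>) t K_n for some t \<in> T.
  Such a T comes from three column reductions of k \<in> K: the last row of k modulo \<varpi>^N is a
  point of the projective plane over R/\<varpi>^N R, the second row then gives a point of the
  projective line, and finally k31 is fixed modulo \<varpi>^(2N).  Writing the coordinates as
  \<varpi>-adic expansions with digits in a set of residue representatives gives
  |T| \<le> q^(2N)(1 + 1/q + 1/q^2) q^N (1 + 1/q) q^N \<le> q^(4N)(1 + 1/q)^3.
\<close>

section \<open>Matrices of size 3\<close>

definition matrix3 :: "'a::zero \<Rightarrow> 'a \<Rightarrow> 'a \<Rightarrow> 'a \<Rightarrow> 'a \<Rightarrow> 'a \<Rightarrow> 'a \<Rightarrow> 'a \<Rightarrow> 'a \<Rightarrow> 'a^3^3" where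
  "matrix3 a b c d e f g h k = vector [vector [a, b, c], vector [d, e, f], vector [g, h, k]]"

lemma matrix3_nth [simp]:
  "matrix3 a b c d e f g h k $ 1 $ 1 = a" "matrix3 a b c d e f g h k $ 1 $ 2 = b"
  "matrix3 a b c d e f g h k $ 1 $ 3 = c" "matrix3 a b c d e f g h k $ 2 $ 1 = d"
  "matrix3 a b c d e f g h k $ 2 $ 2 = e" "matrix3 a b c d e f g h k $ 2 $ 3 = f"
  "matrix3 a b c d e f g h k $ 3 $ 1 = g" "matrix3 a b c d e f g h k $ 3 $ 2 = h"
  "matrix3 a b c d e f g h k $ 3 $ 3 = k"
  by (simp_all add: matrix3_def)

lemma mat_nth3 [simp]:
  "(mat c :: 'a::zero^3^3) $ 1 $ 1 = c" "(mat c :: 'a^3^3) $ 1 $ 2 = 0" "(mat c :: 'a^3^3) $ 1 $ 3 = 0"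
  "(mat c :: 'a^3^3) $ 2 $ 1 = 0" "(mat c :: 'a^3^3) $ 2 $ 2 = c" "(mat c :: 'a^3^3) $ 2 $ 3 = 0"
  "(mat c :: 'a^3^3) $ 3 $ 1 = 0" "(mat c :: 'a^3^3) $ 3 $ 2 = 0" "(mat c :: 'a^3^3) $ 3 $ 3 = c"
  by (simp_all add: mat_def)

lemma matrix_mult_nth3:
  "((A::'a::comm_ring_1^3^3) ** B) $ i $ j = A$i$1 * B$1$j + A$i$2 * B$2$j + A$i$3 * B$3$j"
  by (simp add: matrix_matrix_mult_def sum_3)

lemma mat3_eq_iff: "(A::'a^3^3) = B \<longleftrightarrow>
  A$1$1 = B$1$1 \<and> A$1$2 = B$1$2 \<and> A$1$3 = B$1$3 \<and>
  A$2$1 = B$2$1 \<and> A$2$2 = B$2$2 \<and> A$2$3 = B$2$3 \<and>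
  A$3$1 = B$3$1 \<and> A$3$2 = B$3$2 \<and> A$3$3 = B$3$3"
  by (simp add: vec_eq_iff forall_3)

lemma mat_mult_mat3: "(mat c :: 'a::comm_ring_1^3^3) ** mat d = mat (c * d)"
  unfolding mat3_eq_iff matrix_mult_nth3 by simp

lemma mat_mult_commute3: "(mat c :: 'a::comm_ring_1^3^3) ** (A :: 'a^3^3) = A ** mat c"
  unfolding mat3_eq_iff matrix_mult_nth3 by (simp add: mult.commute)

definition adjugate3 :: "'a::comm_ring_1^3^3 \<Rightarrow> 'a^3^3" where
  "adjugate3 g = matrix3
    (g$2$2 * g$3$3 - g$2$3 * g$3$2) (g$1$3 * g$3$2 - g$1$2 * g$3$3) (g$1$2 * g$2$3 - g$1$3 * g$2$2)
    (g$2$3 * g$3$1 - g$2$1 * g$3$3) (g$1$1 * g$3$3 - g$1$3 * g$3$1) (g$1$3 * g$2$1 - g$1$1 * g$2$3)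
    (g$2$1 * g$3$2 - g$2$2 * g$3$1) (g$1$2 * g$3$1 - g$1$1 * g$3$2) (g$1$1 * g$2$2 - g$1$2 * g$2$1)"

lemma matrix_mult_adjugate3: "g ** adjugate3 g = mat (det g)"
  unfolding mat3_eq_iff matrix_mult_nth3 adjugate3_def det_3 by (simp add: algebra_simps)

lemma adjugate3_matrix_mult: "adjugate3 g ** g = mat (det g)"
  unfolding mat3_eq_iff matrix_mult_nth3 adjugate3_def det_3 by (simp add: algebra_simps)

section \<open>Discrete valuations\<close>

locale discrete_valuation =
  fixes v :: "'a::field \<Rightarrow> int" and w :: 'a
  assumes val_mult: "x \<noteq> 0 \<Longrightarrow> y \<noteq> 0 \<Longrightarrow> v (x * y) = v x + v y"
    and val_add: "x \<noteq> 0 \<Longrightarrow> y \<noteq> 0 \<Longrightarrow> x + y \<noteq> 0 \<Longrightarrow> min (v x) (v y) \<le> v (x + y)"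
    and uniformizer_nonzero: "w \<noteq> 0"
    and val_uniformizer: "v w = 1"

lemma padic_field_discrete_valuation:
  "padic_field v \<Longrightarrow> w \<noteq> 0 \<Longrightarrow> v w = 1 \<Longrightarrow> discrete_valuation v w"
  unfolding padic_field_def discrete_valuation_def by blast

lemma padic_field_finite_residue_field: "padic_field v \<Longrightarrow> finite (residue_field v)"
  unfolding padic_field_def by (elim conjE)

context discrete_valuation
begin

lemma val_one: "v 1 = 0"
  using val_mult[of 1 1] by simp

lemma val_inverse: "x \<noteq> 0 \<Longrightarrow> v (inverse x) = - v x"
  using val_mult[of x "inverse x"] val_one by simp

lemma val_minus_one: "v (- 1) = 0"
  using val_mult[of "- 1" "- 1"] val_one by simp

lemma val_minus: "x \<noteq> 0 \<Longrightarrow> v (- x) = v x"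
  using val_mult[of "- 1" x] val_minus_one by simp

lemma val_divide: "x \<noteq> 0 \<Longrightarrow> y \<noteq> 0 \<Longrightarrow> v (x / y) = v x - v y"
  using val_mult[of x "inverse y"] val_inverse[of y] by (simp add: divide_inverse)

lemma val_uniformizer_power: "v (w ^ n) = int n"
  by (induction n) (simp_all add: val_one val_mult uniformizer_nonzero val_uniformizer)

lemma val_uniformizer_power_int: "v (w powi k) = k"
proof (cases "k \<ge> 0")
  case True
  then show ?thesis
    using val_uniformizer_power[of "nat k"] by (simp add: power_int_def)
next
  case False
  then show ?thesis
    using val_uniformizer_power[of "nat (- k)"] val_inverse[of "w ^ nat (- k)"] uniformizer_nonzero
    by (simp add: power_int_def power_inverse)
qed

lemma unit_times_uniformizer_power:
  assumes "b \<noteq> 0" "v b = 0"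
  shows "w ^ n * b \<noteq> 0" "v (w ^ n * b) = int n"
  using assms val_mult[of "w ^ n" b] uniformizer_nonzero val_uniformizer_power by simp_all

lemma unit_times_uniformizer:
  assumes "b \<noteq> 0" "v b = 0"
  shows "w * b \<noteq> 0" "v (w * b) = 1"
  using unit_times_uniformizer_power[OF assms, of 1] by simp_all

lemma in_ideal_zero [simp]: "in_ideal v n 0"
  by (simp add: in_ideal_def)

lemma in_ideal_add: "in_ideal v n x \<Longrightarrow> in_ideal v n y \<Longrightarrow> in_ideal v n (x + y)"
  unfolding in_ideal_def by (metis add.right_neutral add_0 min.bounded_iff order.trans val_add)

lemma in_ideal_uminus_iff [simp]: "in_ideal v n (- x) \<longleftrightarrow> in_ideal v n x"
  unfolding in_ideal_def by (cases "x = 0") (auto simp: val_minus)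

lemma in_ideal_diff: "in_ideal v n x \<Longrightarrow> in_ideal v n y \<Longrightarrow> in_ideal v n (x - y)"
  using in_ideal_add[of n x "- y"] by simp

lemma in_ideal_mult: "in_ideal v a x \<Longrightarrow> in_ideal v b y \<Longrightarrow> in_ideal v (a + b) (x * y)"
  unfolding in_ideal_def by (cases "x = 0 \<or> y = 0") (auto simp: val_mult)

lemma in_ideal_mono: "in_ideal v a x \<Longrightarrow> b \<le> a \<Longrightarrow> in_ideal v b x"
  unfolding in_ideal_def by auto

lemma in_ideal_mult_right: "in_ideal v a x \<Longrightarrow> in_ideal v 0 y \<Longrightarrow> in_ideal v a (x * y)"
  using in_ideal_mult[of a x 0 y] by simp

lemma in_ideal_mult_left: "in_ideal v 0 x \<Longrightarrow> in_ideal v a y \<Longrightarrow> in_ideal v a (x * y)"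
  using in_ideal_mult[of 0 x a y] by simp

lemma in_ideal_one: "in_ideal v 0 1"
  by (simp add: in_ideal_def val_one)

lemma not_in_ideal_one: "\<not> in_ideal v 1 1" "\<not> in_ideal v 1 (- 1)"
  by (simp_all add: in_ideal_def val_one val_minus_one)

lemma in_ideal_uniformizer: "in_ideal v 1 w" "in_ideal v 0 w"
  by (simp_all add: in_ideal_def val_uniformizer)

lemma in_ideal_uniformizer_power: "in_ideal v (int n) (w ^ n)"
  by (simp add: in_ideal_def val_uniformizer_power)

lemma in_ideal_uniformizer_power_int: "in_ideal v k (w powi k)"
  by (simp add: in_ideal_def val_uniformizer_power_int)

lemma unit_of_not_in_ideal: "in_ideal v 0 x \<Longrightarrow> \<not> in_ideal v 1 x \<Longrightarrow> x \<noteq> 0 \<and> v x = 0"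
  unfolding in_ideal_def by auto

lemma in_ideal_divide: "in_ideal v e a \<Longrightarrow> b \<noteq> 0 \<Longrightarrow> v b = e \<Longrightarrow> in_ideal v 0 (a / b)"
  unfolding in_ideal_def by (cases "a = 0") (auto simp: val_divide)

lemma in_ideal_mult3:
  "in_ideal v 0 a \<Longrightarrow> in_ideal v 0 b \<Longrightarrow> in_ideal v 0 c \<Longrightarrow>
    in_ideal v 1 a \<or> in_ideal v 1 b \<or> in_ideal v 1 c \<Longrightarrow> in_ideal v 1 (a * b * c)"
  using in_ideal_mult[of 1 a 0 b] in_ideal_mult[of 0 a 1 b] in_ideal_mult[of 1 "a * b" 0 c]
    in_ideal_mult[of 0 "a * b" 1 c] in_ideal_mult[of 0 a 0 b]
  by auto

end

section \<open>Residue representatives and expansions\<close>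

lemma residue_representatives:
  assumes "finite (residue_field v)"
  obtains S where "finite S" "card S \<le> residue_card v" "\<And>s. s \<in> S \<Longrightarrow> in_ideal v 0 s"
    "\<And>x. in_ideal v 0 x \<Longrightarrow> \<exists>s\<in>S. in_ideal v 1 (x - s)"
proof -
  let ?r = "{(x, y). x \<in> val_ring v \<and> y \<in> val_ring v \<and> in_ideal v 1 (x - y)}"
  define S where "S = (\<lambda>C. SOME x. x \<in> C) ` residue_field v"
  have "finite S" "card S \<le> residue_card v"
    using assms unfolding S_def residue_card_def by (simp_all add: card_image_le)
  moreover have "in_ideal v 0 s" if s_mem: "s \<in> S" for s
  proof -
    obtain C where C: "C \<in> residue_field v" and s: "s = (SOME x. x \<in> C)"
      using s_mem unfolding S_def by blast
    obtain x where x: "x \<in> val_ring v" and Cx: "C = ?r `` {x}"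
      using C unfolding residue_field_def by (rule quotientE)
    have "s \<in> C"
      unfolding s by (rule someI[of _ x]) (use x Cx in \<open>simp add: val_ring_def in_ideal_def\<close>)
    then show ?thesis
      using Cx by (simp add: val_ring_def)
  qed
  moreover have "\<exists>s\<in>S. in_ideal v 1 (x - s)" if "in_ideal v 0 x" for x
  proof -
    let ?C = "?r `` {x}"
    have C: "?C \<in> residue_field v"
      unfolding residue_field_def by (rule quotientI) (use that in \<open>simp add: val_ring_def in_ideal_def\<close>)
    have "(SOME y. y \<in> ?C) \<in> ?C"
      by (rule someI[of _ x]) (use that in \<open>simp add: val_ring_def in_ideal_def\<close>)
    moreover have "(SOME y. y \<in> ?C) \<in> S"
      unfolding S_def using C by (rule imageI)
    ultimately show ?thesis
      by auto
  qed
  ultimately show ?thesis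
    using that by blast
qed

primrec expansions :: "'a::semiring_0 \<Rightarrow> 'a set \<Rightarrow> nat \<Rightarrow> 'a set" where
  "expansions w S 0 = {0}"
| "expansions w S (Suc m) = (\<lambda>(s, t). s + w * t) ` (S \<times> expansions w S m)"

lemma finite_expansions: "finite S \<Longrightarrow> finite (expansions w S m)"
  by (induction m) auto

lemma card_expansions_le: "finite S \<Longrightarrow> card (expansions w S m) \<le> card S ^ m"
proof (induction m)
  case 0
  then show ?case by simp
next
  case (Suc m)
  have "card (expansions w S (Suc m)) \<le> card (S \<times> expansions w S m)"
    unfolding expansions.simps by (rule card_image_le) (simp add: Suc.prems finite_expansions)
  also have "\<dots> = card S * card (expansions w S m)"
    by (simp add: card_cartesian_product)
  also have "\<dots> \<le> card S * card S ^ m"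
    using Suc by simp
  finally show ?case by simp
qed

locale residue_system = discrete_valuation +
  fixes S :: "'a::field set"
  assumes finite_reps: "finite S"
    and reps_integral: "s \<in> S \<Longrightarrow> in_ideal v 0 s"
    and reps_cover: "in_ideal v 0 x \<Longrightarrow> \<exists>s\<in>S. in_ideal v 1 (x - s)"
begin

lemma reps_nonempty: "S \<noteq> {}"
  using reps_cover[of 0] by auto

lemma expansions_integral: "t \<in> expansions w S m \<Longrightarrow> in_ideal v 0 t"
proof (induction m arbitrary: t)
  case 0
  then show ?case by simp
next
  case (Suc m)
  then obtain s t' where "s \<in> S" "t' \<in> expansions w S m" "t = s + w * t'"
    by auto
  then show ?case
    using Suc.IH reps_integral in_ideal_add in_ideal_mult_left in_ideal_uniformizer(2) by metis
qed

lemma expansions_approx: "in_ideal v 0 x \<Longrightarrow> \<exists>t\<in>expansions w S m. in_ideal v (int m) (x - t)"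
proof (induction m arbitrary: x)
  case 0
  then show ?case by simp
next
  case (Suc m)
  obtain s where s: "s \<in> S" "in_ideal v 1 (x - s)"
    using reps_cover Suc.prems by blast
  define x' where "x' = (x - s) / w"
  have "in_ideal v 0 x'"
    unfolding x'_def using in_ideal_divide[OF s(2) uniformizer_nonzero val_uniformizer] .
  then obtain t where t: "t \<in> expansions w S m" "in_ideal v (int m) (x' - t)"
    using Suc.IH by blast
  have "x - (s + w * t) = w * (x' - t)"
    unfolding x'_def using uniformizer_nonzero by (simp add: field_simps)
  then have "in_ideal v (int (Suc m)) (x - (s + w * t))"
    using in_ideal_mult[OF in_ideal_uniformizer(1) t(2)] by (simp add: add.commute)
  moreover have "s + w * t \<in> expansions w S (Suc m)"
    using s t by auto
  ultimately show ?case by blast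
qed

lemma exists_expansion_quotient:
  assumes "in_ideal v e a" "b \<noteq> 0" "v b = e"
  shows "\<exists>s\<in>expansions w S M. in_ideal v (e + int M) (a - s * b)"
proof -
  obtain s where s: "s \<in> expansions w S M" "in_ideal v (int M) (a / b - s)"
    using expansions_approx[OF in_ideal_divide[OF assms]] by blast
  have "a - s * b = b * (a / b - s)"
    using assms by (simp add: field_simps)
  moreover have "in_ideal v e b"
    using assms by (simp add: in_ideal_def)
  ultimately show ?thesis
    using in_ideal_mult[OF _ s(2)] s(1) by metis
qed

lemma exists_expansion_quotient_uniformizer:
  assumes "1 \<le> N" "in_ideal v 1 a" "b \<noteq> 0" "v b = 0"
  shows "\<exists>s\<in>expansions w S (N - 1). in_ideal v (int N) (a - s * (w * b))"
  using exists_expansion_quotient[OF assms(2) unit_times_uniformizer[OF assms(3,4)], of "N - 1"] assms(1)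
  by (simp add: of_nat_diff)

end

section \<open>The compact subgroup and its conjugates\<close>

definition Kgrp_level :: "('a::field \<Rightarrow> int) \<Rightarrow> nat \<Rightarrow> 'a mat3 set" where
  "Kgrp_level v N = {h \<in> Kgrp v. in_ideal v (int N) (h$2$1) \<and> in_ideal v (2 * int N) (h$3$1) \<and>
     in_ideal v (int N) (h$3$2)}"

context discrete_valuation
begin

lemma integral_mat_iff: "integral_mat v g \<longleftrightarrow> (\<forall>i j. in_ideal v 0 (g $ i $ j))"
  by (simp add: integral_mat_def val_ring_def)

lemma integral_mat_det: "integral_mat v g \<Longrightarrow> in_ideal v 0 (det g)"
  unfolding integral_mat_iff det_3 by (intro in_ideal_add in_ideal_diff in_ideal_mult_right) auto

lemma integral_mat_mult: "integral_mat v A \<Longrightarrow> integral_mat v B \<Longrightarrow> integral_mat v (A ** B)"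
  unfolding integral_mat_iff matrix_mult_nth3 by (intro allI in_ideal_add in_ideal_mult_right) auto

lemma Kgrp_integral: "g \<in> Kgrp v \<Longrightarrow> integral_mat v g"
  unfolding Kgrp_def by blast

lemma Kgrp_entry_integral: "g \<in> Kgrp v \<Longrightarrow> in_ideal v 0 (g $ i $ j)"
  using Kgrp_integral integral_mat_iff by blast

lemma Kgrp_det_unit: "g \<in> Kgrp v \<Longrightarrow> \<not> in_ideal v 1 (det g)"
proof
  assume g: "g \<in> Kgrp v" and d: "in_ideal v 1 (det g)"
  then obtain h where h: "g ** h = mat 1" "integral_mat v h"
    unfolding Kgrp_def by blast
  have "det g * det h = 1"
    using h(1) by (metis det_mul det_I)
  moreover have "in_ideal v 1 (det g * det h)"
    using in_ideal_mult_right[OF d integral_mat_det[OF h(2)]] .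
  ultimately show False
    using not_in_ideal_one by simp
qed

lemma Kgrp_one: "mat 1 \<in> Kgrp v"
proof -
  have "integral_mat v (mat 1)"
    unfolding integral_mat_iff mat_def by (simp add: in_ideal_one)
  then show ?thesis
    unfolding Kgrp_def by (intro CollectI exI[of _ "mat 1"]) simp
qed

lemma Kgrp_mult: "g \<in> Kgrp v \<Longrightarrow> h \<in> Kgrp v \<Longrightarrow> g ** h \<in> Kgrp v"
proof -
  assume "g \<in> Kgrp v" "h \<in> Kgrp v"
  then obtain g' h' where
    g: "g ** g' = mat 1" "g' ** g = mat 1" "integral_mat v g" "integral_mat v g'" and
    h: "h ** h' = mat 1" "h' ** h = mat 1" "integral_mat v h" "integral_mat v h'"
    unfolding Kgrp_def by blast
  have "(g ** h) ** (h' ** g') = mat 1" "(h' ** g') ** (g ** h) = mat 1"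
    by (metis g(1,2) h(1,2) matrix_mul_assoc matrix_mul_rid)+
  then show ?thesis
    unfolding Kgrp_def using g h integral_mat_mult by blast
qed

lemma Kgrp_left_inverse: "g \<in> Kgrp v \<Longrightarrow> \<exists>g'\<in>Kgrp v. g' ** g = mat 1"
  unfolding Kgrp_def by blast

lemma Kgrp_of_unit_det:
  assumes g: "integral_mat v g" and d: "\<not> in_ideal v 1 (det g)"
  shows "g \<in> Kgrp v"
proof -
  have d0: "det g \<noteq> 0" "v (det g) = 0"
    using unit_of_not_in_ideal[OF integral_mat_det[OF g] d] by auto
  define h where "h = adjugate3 g ** mat (inverse (det g))"
  have "g ** h = mat 1"
    unfolding h_def by (simp add: matrix_mul_assoc matrix_mult_adjugate3 mat_mult_mat3 d0(1))
  moreover have "h ** g = mat 1"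
    unfolding h_def
    by (metis adjugate3_matrix_mult mat_mult_commute3 mat_mult_mat3 matrix_mul_assoc d0(1) right_inverse)
  moreover have "integral_mat v h"
  proof -
    have "integral_mat v (adjugate3 g)"
      using g unfolding integral_mat_iff adjugate3_def forall_3
      by (simp add: in_ideal_diff in_ideal_mult_right[where a = 0])
    moreover have "integral_mat v (mat (inverse (det g)))"
      using d0 unfolding integral_mat_iff mat_def by (simp add: in_ideal_def val_inverse)
    ultimately show ?thesis
      unfolding h_def by (rule integral_mat_mult)
  qed
  ultimately show ?thesis
    unfolding Kgrp_def using g by blast
qed

lemma Kgrp_factor_right:
  "k \<in> Kgrp v \<Longrightarrow> s \<in> Kgrp v \<Longrightarrow> s ** t = mat 1 \<Longrightarrow> k ** s \<in> Kgrp v \<and> k = (k ** s) ** t"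
  by (metis Kgrp_mult matrix_mul_assoc matrix_mul_rid)

lemma Kgrp_row3_has_unit:
  assumes "k \<in> Kgrp v"
  shows "\<not> in_ideal v 1 (k$3$1) \<or> \<not> in_ideal v 1 (k$3$2) \<or> \<not> in_ideal v 1 (k$3$3)"
proof (rule ccontr)
  assume "\<not> ?thesis"
  then have "in_ideal v 1 (det k)"
    unfolding det_3 using Kgrp_entry_integral[OF assms]
    by (intro in_ideal_add in_ideal_diff in_ideal_mult3) auto
  then show False
    using Kgrp_det_unit[OF assms] by blast
qed

lemma Kgrp_row2_has_unit:
  assumes "k \<in> Kgrp v" "in_ideal v 1 (k$3$1)" "in_ideal v 1 (k$3$2)"
  shows "\<not> in_ideal v 1 (k$2$1) \<or> \<not> in_ideal v 1 (k$2$2)"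
proof (rule ccontr)
  assume "\<not> ?thesis"
  then have "in_ideal v 1 (det k)"
    unfolding det_3 using assms Kgrp_entry_integral[OF assms(1)]
    by (intro in_ideal_add in_ideal_diff in_ideal_mult3) auto
  then show False
    using Kgrp_det_unit[OF assms(1)] by blast
qed

lemma Kgrp_corner_unit:
  assumes "k \<in> Kgrp v" "in_ideal v 1 (k$2$1)" "in_ideal v 1 (k$3$1)" "in_ideal v 1 (k$3$2)"
  shows "\<not> in_ideal v 1 (k$3$3)"
proof
  assume "in_ideal v 1 (k$3$3)"
  then have "in_ideal v 1 (det k)"
    unfolding det_3 using assms Kgrp_entry_integral[OF assms(1)]
    by (intro in_ideal_add in_ideal_diff in_ideal_mult3) auto
  then show False
    using Kgrp_det_unit[OF assms(1)] by blast
qed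

lemma lam_mat_nth [simp]:
  "lam_mat w a b c $ 1 $ 1 = w powi a" "lam_mat w a b c $ 1 $ 2 = 0" "lam_mat w a b c $ 1 $ 3 = 0"
  "lam_mat w a b c $ 2 $ 1 = 0" "lam_mat w a b c $ 2 $ 2 = w powi b" "lam_mat w a b c $ 2 $ 3 = 0"
  "lam_mat w a b c $ 3 $ 1 = 0" "lam_mat w a b c $ 3 $ 2 = 0" "lam_mat w a b c $ 3 $ 3 = w powi c"
  by (simp_all add: lam_mat_def)

lemma lam_mat_inverse:
  "lam_mat w a b c ** lam_mat w (- a) (- b) (- c) = mat 1"
  "lam_mat w (- a) (- b) (- c) ** lam_mat w a b c = mat 1"
proof -
  have "w powi e * w powi (- e) = 1" for e
    using uniformizer_nonzero by (simp add: power_int_minus field_simps)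
  then show "lam_mat w a b c ** lam_mat w (- a) (- b) (- c) = mat 1"
    "lam_mat w (- a) (- b) (- c) ** lam_mat w a b c = mat 1"
    unfolding mat3_eq_iff matrix_mult_nth3 by (simp_all add: mult.commute)
qed

lemma in_ideal_conj_entry:
  assumes "in_ideal v e x" "b \<le> a + e"
  shows "in_ideal v 0 (w powi a * x * w powi (- b))"
proof -
  have "in_ideal v (a + e + - b) (w powi a * x * w powi (- b))"
    by (intro in_ideal_mult in_ideal_uniformizer_power_int assms(1))
  then show ?thesis
    using assms(2) in_ideal_mono by fastforce
qed

lemma lam_conj_Kgrp_level:
  assumes h: "h \<in> Kgrp_level v N"
    and l: "l2 \<le> l1" "l3 \<le> l2" "l1 - l2 \<le> int N" "l2 - l3 \<le> int N"
  shows "lam_mat w l1 l2 l3 ** h ** lam_mat w (- l1) (- l2) (- l3) \<in> Kgrp v"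
proof (rule Kgrp_of_unit_det)
  have hK: "h \<in> Kgrp v"
    and h21: "in_ideal v (int N) (h$2$1)" and h31: "in_ideal v (2 * int N) (h$3$1)"
    and h32: "in_ideal v (int N) (h$3$2)"
    using h unfolding Kgrp_level_def by auto
  note hij = Kgrp_entry_integral[OF hK]
  show "integral_mat v (lam_mat w l1 l2 l3 ** h ** lam_mat w (- l1) (- l2) (- l3))"
    unfolding integral_mat_iff forall_3 matrix_mult_nth3 using l
    by (simp add: in_ideal_conj_entry[OF hij] in_ideal_conj_entry[OF h21]
        in_ideal_conj_entry[OF h31] in_ideal_conj_entry[OF h32])
  have "det (lam_mat w l1 l2 l3) * det (lam_mat w (- l1) (- l2) (- l3)) = 1"
    using lam_mat_inverse(1)[of l1 l2 l3] by (metis det_mul det_I)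
  then have "det (lam_mat w l1 l2 l3 ** h ** lam_mat w (- l1) (- l2) (- l3)) = det h"
    by (simp add: det_mul algebra_simps)
  then show "\<not> in_ideal v 1 (det (lam_mat w l1 l2 l3 ** h ** lam_mat w (- l1) (- l2) (- l3)))"
    using Kgrp_det_unit[OF hK] by simp
qed

end

section \<open>Coset representatives\<close>

lemma cell_count_bound:
  fixes c Q :: real
  assumes "0 \<le> c" "c \<le> Q" "0 < Q" "1 \<le> N"
  shows "c ^ N * (c ^ N + c ^ (N - 1)) * (c ^ N * c ^ N + c ^ N * c ^ (N - 1) + c ^ (N - 1) * c ^ (N - 1))
    \<le> Q ^ (4 * N) * (1 + 1 / Q) ^ 3"
proof -
  define a where "a = Q ^ (N - 1)"
  have a: "0 \<le> a" "Q ^ N = Q * a"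
    using assms by (simp_all add: a_def flip: power_Suc)
  have "c ^ N * (c ^ N + c ^ (N - 1)) * (c ^ N * c ^ N + c ^ N * c ^ (N - 1) + c ^ (N - 1) * c ^ (N - 1))
    \<le> Q ^ N * (Q ^ N + Q ^ (N - 1)) * (Q ^ N * Q ^ N + Q ^ N * Q ^ (N - 1) + Q ^ (N - 1) * Q ^ (N - 1))"
    using assms by (intro mult_mono add_mono power_mono) auto
  also have "\<dots> = a ^ 4 * Q * (Q + 1) * (Q * Q + Q + 1)"
    unfolding a(2) a_def[symmetric] by (simp add: algebra_simps power_def)
  also have "\<dots> \<le> a ^ 4 * Q * (Q + 1) * ((Q + 1) * (Q + 1))"
    using assms a by (intro mult_left_mono) (auto simp: algebra_simps)
  also have "\<dots> = Q ^ (4 * N) * (1 + 1 / Q) ^ 3"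
  proof -
    have "Q ^ (4 * N) = (Q * a) ^ 4"
      using a by (simp add: power_mult mult.commute)
    then show ?thesis
      using assms by (simp add: field_simps power_mult_distrib) (simp add: power_def algebra_simps)
  qed
  finally show ?thesis .
qed

context residue_system
begin

text \<open>The last rows of plane_cells N run through the three cells [x : y : 1], [x : 1 : \<varpi>y],
  [1 : \<varpi>x : \<varpi>y] of the projective plane over R/\<varpi>^N R.\<close>

definition plane_cells :: "nat \<Rightarrow> 'a mat3 set" where
  "plane_cells N =
     (\<lambda>(x, y). matrix3 1 0 0 0 1 0 x y 1) ` (expansions w S N \<times> expansions w S N) \<union>
     (\<lambda>(x, y). matrix3 1 0 0 0 0 1 x 1 (w * y)) ` (expansions w S N \<times> expansions w S (N - 1)) \<union>
     (\<lambda>(x, y). matrix3 0 1 0 0 0 1 1 (w * x) (w * y)) ` (expansions w S (N - 1) \<times> expansions w S (N - 1))"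

definition line_cells :: "nat \<Rightarrow> 'a mat3 set" where
  "line_cells N =
     (\<lambda>x. matrix3 1 0 0 x 1 0 0 0 1) ` expansions w S N \<union>
     (\<lambda>y. matrix3 0 1 0 1 (w * y) 0 0 0 1) ` expansions w S (N - 1)"

definition corner_cells :: "nat \<Rightarrow> 'a mat3 set" where
  "corner_cells N = (\<lambda>x. matrix3 1 0 0 0 1 0 (w ^ N * x) 0 1) ` expansions w S N"

lemma plane_reduction_33:
  assumes k: "k \<in> Kgrp v" and k33: "\<not> in_ideal v 1 (k$3$3)"
  shows "\<exists>t\<in>plane_cells N. \<exists>m\<in>Kgrp v.
    in_ideal v (int N) (m$3$1) \<and> in_ideal v (int N) (m$3$2) \<and> k = m ** t"
proof -
  have b: "k$3$3 \<noteq> 0" "v (k$3$3) = 0"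
    using unit_of_not_in_ideal[OF Kgrp_entry_integral[OF k] k33] by auto
  obtain x where x: "x \<in> expansions w S N" "in_ideal v (int N) (k$3$1 - x * k$3$3)"
    using exists_expansion_quotient[OF Kgrp_entry_integral[OF k] b, of N] by auto
  obtain y where y: "y \<in> expansions w S N" "in_ideal v (int N) (k$3$2 - y * k$3$3)"
    using exists_expansion_quotient[OF Kgrp_entry_integral[OF k] b, of N] by auto
  define s where "s = matrix3 1 0 0 0 1 0 (- x) (- y) (1::'a)"
  define t where "t = matrix3 1 0 0 0 1 0 x y (1::'a)"
  have "s \<in> Kgrp v"
    by (rule Kgrp_of_unit_det)
      (use expansions_integral[OF x(1)] expansions_integral[OF y(1)] in
        \<open>simp_all add: s_def integral_mat_iff forall_3 in_ideal_one det_3 not_in_ideal_one\<close>)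
  then have "k ** s \<in> Kgrp v \<and> k = (k ** s) ** t"
    by (rule Kgrp_factor_right[OF k]) (simp add: s_def t_def mat3_eq_iff matrix_mult_nth3)
  moreover have "in_ideal v (int N) ((k ** s)$3$1)" "in_ideal v (int N) ((k ** s)$3$2)"
    using x(2) y(2) unfolding s_def matrix_mult_nth3 by (simp_all add: algebra_simps)
  moreover have "t \<in> plane_cells N"
    unfolding plane_cells_def t_def
    by (intro UnI1 rev_image_eqI[of "(x, y)"]) (use x(1) y(1) in auto)
  ultimately show ?thesis by blast
qed

lemma plane_reduction_32:
  assumes N: "1 \<le> N" and k: "k \<in> Kgrp v"
    and k33: "in_ideal v 1 (k$3$3)" and k32: "\<not> in_ideal v 1 (k$3$2)"
  shows "\<exists>t\<in>plane_cells N. \<exists>m\<in>Kgrp v.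
    in_ideal v (int N) (m$3$1) \<and> in_ideal v (int N) (m$3$2) \<and> k = m ** t"
proof -
  have b: "k$3$2 \<noteq> 0" "v (k$3$2) = 0"
    using unit_of_not_in_ideal[OF Kgrp_entry_integral[OF k] k32] by auto
  obtain x where x: "x \<in> expansions w S N" "in_ideal v (int N) (k$3$1 - x * k$3$2)"
    using exists_expansion_quotient[OF Kgrp_entry_integral[OF k] b, of N] by auto
  obtain y where y: "y \<in> expansions w S (N - 1)" "in_ideal v (int N) (k$3$3 - y * (w * k$3$2))"
    using exists_expansion_quotient_uniformizer[OF N k33 b] by blast
  define s where "s = matrix3 1 0 0 (- x) (- (w * y)) 1 0 1 (0::'a)"
  define t where "t = matrix3 1 0 0 0 0 1 x 1 (w * y)"
  have "s \<in> Kgrp v"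
    by (rule Kgrp_of_unit_det)
      (use expansions_integral[OF x(1)] expansions_integral[OF y(1)] in_ideal_uniformizer(2) in
        \<open>simp_all add: s_def integral_mat_iff forall_3 in_ideal_one det_3 not_in_ideal_one
          in_ideal_mult_right[where a = 0]\<close>)
  then have "k ** s \<in> Kgrp v \<and> k = (k ** s) ** t"
    by (rule Kgrp_factor_right[OF k]) (simp add: s_def t_def mat3_eq_iff matrix_mult_nth3)
  moreover have "in_ideal v (int N) ((k ** s)$3$1)" "in_ideal v (int N) ((k ** s)$3$2)"
    using x(2) y(2) unfolding s_def matrix_mult_nth3 by (simp_all add: algebra_simps)
  moreover have "t \<in> plane_cells N"
    unfolding plane_cells_def t_def
    by (rule UnI1, rule UnI2, rule rev_image_eqI[of "(x, y)"]) (use x(1) y(1) in auto)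
  ultimately show ?thesis by blast
qed

lemma plane_reduction_31:
  assumes N: "1 \<le> N" and k: "k \<in> Kgrp v"
    and k33: "in_ideal v 1 (k$3$3)" and k32: "in_ideal v 1 (k$3$2)" and k31: "\<not> in_ideal v 1 (k$3$1)"
  shows "\<exists>t\<in>plane_cells N. \<exists>m\<in>Kgrp v.
    in_ideal v (int N) (m$3$1) \<and> in_ideal v (int N) (m$3$2) \<and> k = m ** t"
proof -
  have b: "k$3$1 \<noteq> 0" "v (k$3$1) = 0"
    using unit_of_not_in_ideal[OF Kgrp_entry_integral[OF k] k31] by auto
  obtain x where x: "x \<in> expansions w S (N - 1)" "in_ideal v (int N) (k$3$2 - x * (w * k$3$1))"
    using exists_expansion_quotient_uniformizer[OF N k32 b] by blast
  obtain y where y: "y \<in> expansions w S (N - 1)" "in_ideal v (int N) (k$3$3 - y * (w * k$3$1))"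
    using exists_expansion_quotient_uniformizer[OF N k33 b] by blast
  define s where "s = matrix3 (- (w * x)) (- (w * y)) 1 1 0 0 0 1 (0::'a)"
  define t where "t = matrix3 0 1 0 0 0 1 1 (w * x) (w * y)"
  have "s \<in> Kgrp v"
    by (rule Kgrp_of_unit_det)
      (use expansions_integral[OF x(1)] expansions_integral[OF y(1)] in_ideal_uniformizer(2) in
        \<open>simp_all add: s_def integral_mat_iff forall_3 in_ideal_one det_3 not_in_ideal_one
          in_ideal_mult_right[where a = 0]\<close>)
  then have "k ** s \<in> Kgrp v \<and> k = (k ** s) ** t"
    by (rule Kgrp_factor_right[OF k]) (simp add: s_def t_def mat3_eq_iff matrix_mult_nth3)
  moreover have "in_ideal v (int N) ((k ** s)$3$1)" "in_ideal v (int N) ((k ** s)$3$2)"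
    using x(2) y(2) unfolding s_def matrix_mult_nth3 by (simp_all add: algebra_simps)
  moreover have "t \<in> plane_cells N"
    unfolding plane_cells_def t_def
    by (intro UnI2 rev_image_eqI[of "(x, y)"]) (use x(1) y(1) in auto)
  ultimately show ?thesis by blast
qed

lemma plane_reduction:
  assumes "1 \<le> N" "k \<in> Kgrp v"
  shows "\<exists>t\<in>plane_cells N. \<exists>m\<in>Kgrp v.
    in_ideal v (int N) (m$3$1) \<and> in_ideal v (int N) (m$3$2) \<and> k = m ** t"
  using Kgrp_row3_has_unit[OF assms(2)] plane_reduction_33[OF assms(2)]
    plane_reduction_32[OF assms] plane_reduction_31[OF assms] by blast

lemma line_reduction_22:
  assumes k: "k \<in> Kgrp v" and k31: "in_ideal v (int N) (k$3$1)" and k32: "in_ideal v (int N) (k$3$2)"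
    and k22: "\<not> in_ideal v 1 (k$2$2)"
  shows "\<exists>t\<in>line_cells N. \<exists>m\<in>Kgrp v.
    in_ideal v (int N) (m$2$1) \<and> in_ideal v (int N) (m$3$1) \<and> in_ideal v (int N) (m$3$2) \<and> k = m ** t"
proof -
  have b: "k$2$2 \<noteq> 0" "v (k$2$2) = 0"
    using unit_of_not_in_ideal[OF Kgrp_entry_integral[OF k] k22] by auto
  obtain x where x: "x \<in> expansions w S N" "in_ideal v (int N) (k$2$1 - x * k$2$2)"
    using exists_expansion_quotient[OF Kgrp_entry_integral[OF k] b, of N] by auto
  define s where "s = matrix3 1 0 0 (- x) 1 0 0 0 (1::'a)"
  define t where "t = matrix3 1 0 0 x 1 0 0 0 (1::'a)"
  have "s \<in> Kgrp v"
    by (rule Kgrp_of_unit_det)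
      (use expansions_integral[OF x(1)] in
        \<open>simp_all add: s_def integral_mat_iff forall_3 in_ideal_one det_3 not_in_ideal_one\<close>)
  then have "k ** s \<in> Kgrp v \<and> k = (k ** s) ** t"
    by (rule Kgrp_factor_right[OF k]) (simp add: s_def t_def mat3_eq_iff matrix_mult_nth3)
  moreover have "in_ideal v (int N) ((k ** s)$2$1)"
    using x(2) unfolding s_def matrix_mult_nth3 by (simp add: algebra_simps)
  moreover have "in_ideal v (int N) ((k ** s)$3$1)"
    using in_ideal_diff[OF k31 in_ideal_mult_right[OF k32 expansions_integral[OF x(1)]]]
    unfolding s_def matrix_mult_nth3 by simp
  moreover have "in_ideal v (int N) ((k ** s)$3$2)"
    using k32 unfolding s_def matrix_mult_nth3 by simp
  moreover have "t \<in> line_cells N"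
    unfolding line_cells_def t_def by (intro UnI1 rev_image_eqI[of x]) (use x(1) in auto)
  ultimately show ?thesis by blast
qed

lemma line_reduction_21:
  assumes N: "1 \<le> N" and k: "k \<in> Kgrp v"
    and k31: "in_ideal v (int N) (k$3$1)" and k32: "in_ideal v (int N) (k$3$2)"
    and k22: "in_ideal v 1 (k$2$2)" and k21: "\<not> in_ideal v 1 (k$2$1)"
  shows "\<exists>t\<in>line_cells N. \<exists>m\<in>Kgrp v.
    in_ideal v (int N) (m$2$1) \<and> in_ideal v (int N) (m$3$1) \<and> in_ideal v (int N) (m$3$2) \<and> k = m ** t"
proof -
  have b: "k$2$1 \<noteq> 0" "v (k$2$1) = 0"
    using unit_of_not_in_ideal[OF Kgrp_entry_integral[OF k] k21] by auto
  obtain y where y: "y \<in> expansions w S (N - 1)" "in_ideal v (int N) (k$2$2 - y * (w * k$2$1))"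
    using exists_expansion_quotient_uniformizer[OF N k22 b] by blast
  have wy: "in_ideal v 0 (w * y)"
    using in_ideal_mult_right[OF in_ideal_uniformizer(2) expansions_integral[OF y(1)]] .
  define s where "s = matrix3 (- (w * y)) 1 0 1 0 0 0 0 (1::'a)"
  define t where "t = matrix3 0 1 0 1 (w * y) 0 0 0 (1::'a)"
  have "s \<in> Kgrp v"
    by (rule Kgrp_of_unit_det)
      (use wy in \<open>simp_all add: s_def integral_mat_iff forall_3 in_ideal_one det_3 not_in_ideal_one\<close>)
  then have "k ** s \<in> Kgrp v \<and> k = (k ** s) ** t"
    by (rule Kgrp_factor_right[OF k]) (simp add: s_def t_def mat3_eq_iff matrix_mult_nth3)
  moreover have "in_ideal v (int N) ((k ** s)$2$1)"
    using y(2) unfolding s_def matrix_mult_nth3 by (simp add: algebra_simps)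
  moreover have "in_ideal v (int N) ((k ** s)$3$1)"
    using in_ideal_diff[OF k32 in_ideal_mult_right[OF k31 wy]]
    unfolding s_def matrix_mult_nth3 by simp
  moreover have "in_ideal v (int N) ((k ** s)$3$2)"
    using k31 unfolding s_def matrix_mult_nth3 by simp
  moreover have "t \<in> line_cells N"
    unfolding line_cells_def t_def by (intro UnI2 rev_image_eqI[of y]) (use y(1) in auto)
  ultimately show ?thesis by blast
qed

lemma line_reduction:
  assumes N: "1 \<le> N" and k: "k \<in> Kgrp v"
    and k31: "in_ideal v (int N) (k$3$1)" and k32: "in_ideal v (int N) (k$3$2)"
  shows "\<exists>t\<in>line_cells N. \<exists>m\<in>Kgrp v.
    in_ideal v (int N) (m$2$1) \<and> in_ideal v (int N) (m$3$1) \<and> in_ideal v (int N) (m$3$2) \<and> k = m ** t"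
proof -
  have "in_ideal v 1 (k$3$1)" "in_ideal v 1 (k$3$2)"
    using k31 k32 N in_ideal_mono by auto
  then show ?thesis
    using Kgrp_row2_has_unit[OF k] line_reduction_22[OF k k31 k32] line_reduction_21[OF N k k31 k32]
    by blast
qed

lemma corner_reduction:
  assumes N: "1 \<le> N" and k: "k \<in> Kgrp v" and k21: "in_ideal v (int N) (k$2$1)"
    and k31: "in_ideal v (int N) (k$3$1)" and k32: "in_ideal v (int N) (k$3$2)"
  shows "\<exists>t\<in>corner_cells N. \<exists>h\<in>Kgrp_level v N. k = h ** t"
proof -
  have "\<not> in_ideal v 1 (k$3$3)"
    using Kgrp_corner_unit[OF k] k21 k31 k32 N in_ideal_mono by auto
  then have b: "k$3$3 \<noteq> 0" "v (k$3$3) = 0"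
    using unit_of_not_in_ideal[OF Kgrp_entry_integral[OF k]] by auto
  obtain x where x: "x \<in> expansions w S N" "in_ideal v (int N + int N) (k$3$1 - x * (w ^ N * k$3$3))"
    using exists_expansion_quotient[OF k31 unit_times_uniformizer_power[OF b]] by blast
  have wx: "in_ideal v (int N) (w ^ N * x)"
    using in_ideal_mult_right[OF in_ideal_uniformizer_power expansions_integral[OF x(1)]] .
  define s where "s = matrix3 1 0 0 0 1 0 (- (w ^ N * x)) 0 (1::'a)"
  define t where "t = matrix3 1 0 0 0 1 0 (w ^ N * x) 0 (1::'a)"
  have "s \<in> Kgrp v"
    by (rule Kgrp_of_unit_det)
      (use in_ideal_mono[OF wx] in
        \<open>simp_all add: s_def integral_mat_iff forall_3 in_ideal_one det_3 not_in_ideal_one\<close>)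
  then have "k ** s \<in> Kgrp v \<and> k = (k ** s) ** t"
    by (rule Kgrp_factor_right[OF k]) (simp add: s_def t_def mat3_eq_iff matrix_mult_nth3)
  moreover have "in_ideal v (int N) ((k ** s)$2$1)"
    using in_ideal_diff[OF k21 in_ideal_mult_left[OF Kgrp_entry_integral[OF k] wx]]
    unfolding s_def matrix_mult_nth3 by simp
  moreover have "in_ideal v (2 * int N) ((k ** s)$3$1)"
    using x(2) unfolding s_def matrix_mult_nth3 by (simp add: algebra_simps mult_2)
  moreover have "in_ideal v (int N) ((k ** s)$3$2)"
    using k32 unfolding s_def matrix_mult_nth3 by simp
  moreover have "t \<in> corner_cells N"
    unfolding corner_cells_def t_def using x(1) by blast
  ultimately show ?thesis
    unfolding Kgrp_level_def by blast
qed

definition cells :: "nat \<Rightarrow> 'a mat3 set" where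
  "cells N = (\<lambda>(a, b, c). a ** b ** c) ` (corner_cells N \<times> line_cells N \<times> plane_cells N)"

lemma Kgrp_cell_decomposition:
  assumes N: "1 \<le> N" and k: "k \<in> Kgrp v"
  shows "\<exists>t\<in>cells N. \<exists>h\<in>Kgrp_level v N. k = h ** t"
proof -
  obtain t1 m1 where t1: "t1 \<in> plane_cells N" "m1 \<in> Kgrp v" "k = m1 ** t1"
    and m1: "in_ideal v (int N) (m1$3$1)" "in_ideal v (int N) (m1$3$2)"
    using plane_reduction[OF N k] by blast
  obtain t2 m2 where t2: "t2 \<in> line_cells N" "m2 \<in> Kgrp v" "m1 = m2 ** t2"
    and m2: "in_ideal v (int N) (m2$2$1)" "in_ideal v (int N) (m2$3$1)" "in_ideal v (int N) (m2$3$2)"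
    using line_reduction[OF N t1(2) m1] by blast
  obtain t3 h where t3: "t3 \<in> corner_cells N" "h \<in> Kgrp_level v N" "m2 = h ** t3"
    using corner_reduction[OF N t2(2) m2] by blast
  have "k = h ** (t3 ** t2 ** t1)"
    using t1(3) t2(3) t3(3) by (simp add: matrix_mul_assoc)
  moreover have "t3 ** t2 ** t1 \<in> cells N"
    unfolding cells_def using t1(1) t2(1) t3(1) by (intro rev_image_eqI[of "(t3, t2, t1)"]) auto
  ultimately show ?thesis
    using t3(2) by blast
qed

lemma finite_cells: "finite (cells N)"
  unfolding cells_def corner_cells_def line_cells_def plane_cells_def
  by (simp add: finite_expansions finite_reps)

lemma card_cells_le:
  defines "c \<equiv> card S"
  shows "card (cells N) \<le> c ^ N * (c ^ N + c ^ (N - 1)) *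
    (c ^ N * c ^ N + c ^ N * c ^ (N - 1) + c ^ (N - 1) * c ^ (N - 1))"
proof -
  have E: "card (expansions w S m) \<le> c ^ m" for m
    unfolding c_def using card_expansions_le[OF finite_reps] .
  have fin: "finite (expansions w S m)" for m
    using finite_expansions[OF finite_reps] .
  have "card (corner_cells N) \<le> c ^ N"
    unfolding corner_cells_def using card_image_le[OF fin] E order_trans by blast
  moreover have "card (line_cells N) \<le> c ^ N + c ^ (N - 1)"
    unfolding line_cells_def
    by (intro order_trans[OF card_Un_le] add_mono order_trans[OF card_image_le[OF fin] E])
  moreover have "card (plane_cells N) \<le> c ^ N * c ^ N + c ^ N * c ^ (N - 1) + c ^ (N - 1) * c ^ (N - 1)"
    unfolding plane_cells_def
    by (intro order_trans[OF card_Un_le] add_mono order_trans[OF card_image_le]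
        order_trans[OF eq_imp_le[OF card_cartesian_product]] mult_mono E) (simp_all add: fin)
  moreover have "card (cells N) \<le> card (corner_cells N) * card (line_cells N) * card (plane_cells N)"
  proof -
    have "finite (corner_cells N)" "finite (line_cells N)" "finite (plane_cells N)"
      unfolding corner_cells_def line_cells_def plane_cells_def by (simp_all add: fin)
    then have "card (cells N) \<le> card (corner_cells N \<times> line_cells N \<times> plane_cells N)"
      unfolding cells_def by (intro card_image_le) simp
    then show ?thesis
      by (simp add: card_cartesian_product mult.assoc)
  qed
  ultimately show ?thesis
    by (meson mult_le_mono order_trans)
qed

lemma coset_representatives_card_le:
  assumes Q: "real (card S) \<le> Q" "1 \<le> Q"
  shows "\<exists>T. finite T \<and> real (card T) \<le> Q ^ (4 * N) * (1 + 1 / Q) ^ 3 \<and>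
    (\<forall>k\<in>Kgrp v. \<exists>t\<in>T. \<exists>h\<in>Kgrp_level v N. k = h ** t)"
proof (cases "N = 0")
  case True
  have "Kgrp_level v 0 = Kgrp v"
    unfolding Kgrp_level_def using Kgrp_entry_integral by auto
  moreover have "1 \<le> (1 + 1 / Q) ^ 3"
    using Q by (intro one_le_power) auto
  ultimately show ?thesis
    using True by (intro exI[of _ "{mat 1}"]) auto
next
  case False
  let ?c = "real (card S)"
  have "real (card (cells N)) \<le> ?c ^ N * (?c ^ N + ?c ^ (N - 1)) *
      (?c ^ N * ?c ^ N + ?c ^ N * ?c ^ (N - 1) + ?c ^ (N - 1) * ?c ^ (N - 1))"
    using of_nat_mono[OF card_cells_le[of N]] by simp
  also have "\<dots> \<le> Q ^ (4 * N) * (1 + 1 / Q) ^ 3"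
    using Q False by (intro cell_count_bound) auto
  finally have "real (card (cells N)) \<le> Q ^ (4 * N) * (1 + 1 / Q) ^ 3" .
  then show ?thesis
    using Kgrp_cell_decomposition False finite_cells by (intro exI[of _ "cells N"]) auto
qed

end

lemma (in discrete_valuation) Kgrp_level_coset_representatives:
  assumes "finite (residue_field v)"
  defines "q \<equiv> real (residue_card v)"
  obtains T where "finite T" "real (card T) \<le> q ^ (4 * N) * (1 + 1 / q) ^ 3"
    "\<forall>k\<in>Kgrp v. \<exists>t\<in>T. \<exists>h\<in>Kgrp_level v N. k = h ** t"
proof -
  obtain S where "finite S" "card S \<le> residue_card v" "\<And>s. s \<in> S \<Longrightarrow> in_ideal v 0 s"
    "\<And>x. in_ideal v 0 x \<Longrightarrow> \<exists>s\<in>S. in_ideal v 1 (x - s)"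
    using residue_representatives[OF assms(1)] by blast
  interpret residue_system v w S
    by (intro residue_system.intro residue_system_axioms.intro discrete_valuation_axioms) fact+
  have "1 \<le> card S"
    using finite_reps reps_nonempty by (simp add: Suc_le_eq card_gt_0_iff)
  then have q: "real (card S) \<le> q" "1 \<le> q"
    using \<open>card S \<le> residue_card v\<close> unfolding q_def by linarith+
  from coset_representatives_card_le[OF q] obtain T where "finite T"
    "real (card T) \<le> q ^ (4 * N) * (1 + 1 / q) ^ 3"
    "\<forall>k\<in>Kgrp v. \<exists>t\<in>T. \<exists>h\<in>Kgrp_level v N. k = h ** t"
    by blast
  then show ?thesis
    by (rule that)
qed

section \<open>Double cosets\<close>

context discrete_valuation
begin

lemma Zgrp_mult_Kgrp:
  assumes "z \<in> Zgrp" "k \<in> Kgrp v" "z' \<in> Zgrp" "k' \<in> Kgrp v"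
  shows "z ** k ** (z' ** k' ** g) = (z ** z') ** (k ** k') ** g" "z ** z' \<in> Zgrp"
proof -
  obtain c c' where c: "z = mat c" "z' = mat c'" "c \<noteq> 0" "c' \<noteq> 0"
    using assms(1,3) unfolding Zgrp_def by blast
  have "z ** k ** (z' ** k' ** g) = z ** (k ** z') ** k' ** g"
    by (simp add: matrix_mul_assoc)
  also have "\<dots> = z ** (z' ** k) ** k' ** g"
    unfolding c(2) by (simp only: mat_mult_commute3)
  finally show "z ** k ** (z' ** k' ** g) = (z ** z') ** (k ** k') ** g"
    by (simp add: matrix_mul_assoc)
  show "z ** z' \<in> Zgrp"
    unfolding c Zgrp_def using c(3,4) by (auto simp: mat_mult_mat3)
qed

lemma ZK_Kn_left_mult_subset:
  assumes "z \<in> Zgrp" "k \<in> Kgrp v"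
  shows "ZK_Kn v n (z ** k ** g) \<subseteq> ZK_Kn v n g"
proof
  fix y
  assume "y \<in> ZK_Kn v n (z ** k ** g)"
  then obtain z' k' k'' where y: "y = z' ** k' ** (z ** k ** g) ** k''"
    and z': "z' \<in> Zgrp" "k' \<in> Kgrp v" "k'' \<in> Kn v n"
    unfolding ZK_Kn_def by blast
  then have "y = (z' ** z) ** (k' ** k) ** g ** k''"
    by (simp only: Zgrp_mult_Kgrp(1)[OF z'(1,2) assms])
  then show "y \<in> ZK_Kn v n g"
    unfolding ZK_Kn_def using Zgrp_mult_Kgrp(2)[OF z'(1,2) assms] Kgrp_mult[OF z'(2) assms(2)] z'(3)
    by blast
qed

lemma ZK_Kn_left_mult:
  assumes z: "z \<in> Zgrp" and k: "k \<in> Kgrp v"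
  shows "ZK_Kn v n (z ** k ** g) = ZK_Kn v n g"
proof
  show "ZK_Kn v n (z ** k ** g) \<subseteq> ZK_Kn v n g"
    using ZK_Kn_left_mult_subset[OF assms] .
  obtain c where c: "c \<noteq> 0" "z = mat c"
    using z unfolding Zgrp_def by blast
  obtain k' where k': "k' \<in> Kgrp v" "k' ** k = mat 1"
    using Kgrp_left_inverse[OF k] by blast
  have z': "mat (inverse c) \<in> Zgrp"
    unfolding Zgrp_def using c(1) by auto
  have "mat (inverse c) ** k' ** (z ** k ** g) = (mat (inverse c) ** z) ** (k' ** k) ** g"
    using Zgrp_mult_Kgrp(1)[OF z' k'(1) z k] .
  also have "\<dots> = g"
    using c k'(2) by (simp add: mat_mult_mat3)
  finally show "ZK_Kn v n g \<subseteq> ZK_Kn v n (z ** k ** g)"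
    using ZK_Kn_left_mult_subset[OF z' k'(1), of n "z ** k ** g"] by simp
qed

lemma mem_ZK_Kn_self: "g \<in> ZK_Kn v n g"
proof -
  have "mat 1 \<in> Zgrp" "mat 1 \<in> Kn v n"
    unfolding Zgrp_def Kn_def using Kgrp_one by auto
  then show ?thesis
    unfolding ZK_Kn_def using Kgrp_one by force
qed

lemma dcosets_in_ZK_K_subset:
  assumes T: "\<forall>k\<in>Kgrp v. \<exists>t\<in>T. \<exists>h\<in>Kgrp_level v N. k = h ** t"
    and l: "l2 \<le> l1" "l3 \<le> l2" "l1 - l2 \<le> int N" "l2 - l3 \<le> int N"
  defines "L \<equiv> lam_mat w l1 l2 l3"
  shows "dcosets_in v n (ZK_K v L) \<subseteq> (\<lambda>t. ZK_Kn v n (L ** t)) ` T"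
proof
  fix D
  assume "D \<in> dcosets_in v n (ZK_K v L)"
  then obtain g where D: "D = ZK_Kn v n g" "D \<subseteq> ZK_K v L"
    unfolding dcosets_in_def by blast
  then have "g \<in> ZK_K v L"
    using mem_ZK_Kn_self by blast
  then obtain z k k' where g: "g = z ** k ** L ** k'" "z \<in> Zgrp" "k \<in> Kgrp v" "k' \<in> Kgrp v"
    unfolding ZK_K_def by blast
  obtain t h where t: "t \<in> T" "h \<in> Kgrp_level v N" "k' = h ** t"
    using T g(4) by blast
  define L' where "L' = lam_mat w (- l1) (- l2) (- l3)"
  have hL: "L ** h ** L' \<in> Kgrp v"
    unfolding L_def L'_def using lam_conj_Kgrp_level[OF t(2) l] .
  have "(L ** h ** L') ** L = L ** h"
    unfolding L_def L'_def by (metis lam_mat_inverse(2) matrix_mul_assoc matrix_mul_rid)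
  then have "g = z ** (k ** (L ** h ** L')) ** (L ** t)"
    using g(1) t(3) by (metis matrix_mul_assoc)
  then have "D = ZK_Kn v n (L ** t)"
    using D(1) ZK_Kn_left_mult[OF g(2) Kgrp_mult[OF g(3) hL]] by simp
  then show "D \<in> (\<lambda>t. ZK_Kn v n (L ** t)) ` T"
    using t(1) by blast
qed

end

theorem lemma9p7:
  fixes v :: "'a::field \<Rightarrow> int" and w :: 'a and n j :: nat and l1 l2 l3 :: int
  assumes "padic_field v"
    and "residue_char v \<noteq> 2" and "residue_char v \<noteq> 3"
    and "w \<noteq> 0" and "v w = 1"
    and "1 \<le> j" and "j \<le> n"
    and "l1 \<ge> l2" and "l2 \<ge> l3"
    and "max (l1 - l2) (l2 - l3) \<le> int n - int j"
  shows "finite (dcosets_in v n (ZK_K v (lam_mat w l1 l2 l3))) \<and>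
         real (card (dcosets_in v n (ZK_K v (lam_mat w l1 l2 l3))))
           \<le> real (residue_card v) ^ (4 * n - 4 * j) * (1 + 1 / real (residue_card v)) ^ 3"
proof -
  interpret discrete_valuation v w
    using padic_field_discrete_valuation assms(1,4,5) .
  obtain T where T: "finite T"
    "real (card T) \<le> real (residue_card v) ^ (4 * (n - j)) * (1 + 1 / real (residue_card v)) ^ 3"
    "\<forall>k\<in>Kgrp v. \<exists>t\<in>T. \<exists>h\<in>Kgrp_level v (n - j). k = h ** t"
    using Kgrp_level_coset_representatives[OF padic_field_finite_residue_field[OF assms(1)]] by blast
  have "l1 - l2 \<le> int (n - j)" "l2 - l3 \<le> int (n - j)"
    using assms(7,10) by (simp_all add: of_nat_diff)
  then have sub: "dcosets_in v n (ZK_K v (lam_mat w l1 l2 l3)) \<subseteq>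
      (\<lambda>t. ZK_Kn v n (lam_mat w l1 l2 l3 ** t)) ` T"
    using dcosets_in_ZK_K_subset[OF T(3)] assms(8,9) by blast
  have "card (dcosets_in v n (ZK_K v (lam_mat w l1 l2 l3))) \<le> card T"
    using order_trans[OF card_mono[OF finite_imageI[OF T(1)] sub] card_image_le[OF T(1)]] .
  then show ?thesis
    using finite_subset[OF sub finite_imageI[OF T(1)]] T(2) by (simp add: diff_mult_distrib2)
qed

end
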